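(* Let $W$ and $H$ be arbitrary finite simple graphs, $U\subseteq V(W)$, and $G=W(U)\sqcap H$. Then \[Z(G)\le\min\bigl\{\,Z(W)\,|V(H)|,\ \ Z(H)\,|U|+(|V(W)|-|U|)\,|V(H)|\,\bigr\}.\]
   Context: All graphs are finite, simple and undirected. Zero forcing: given a graph $G$ and a set $S\subseteq V(G)$ of initially filled vertices, the color change rule says that if a filled vertex $v$ has exactly one unfilled neighbor $u$, then $v$ forces $u$ to become filled. $S$ is a zero forcing set if repeatedly applying this rule eventually fills every vertex of $G$. The zero forcing number $Z(G)$ is the minimum cardinality of a zero forcing set of $G$. Generalized hierarchical product: for graphs $W,H$ and $U\subseteq V(W)$ (the root set), $W(U)\sqcap H$ is the graph with vertex set $V(W)\times V(H)$ in which $(x_1,y_1)$ and $(x_2,y_2)$ are adjacent iff either ($x_1=x_2\in U$ and $y_1y_2\in E(H)$) or ($y_1=y_2$ and $x_1x_2\in E(W)$). *)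

theory Defs
  imports Main
begin

definition simple_graph :: "'a set \<Rightarrow> 'a set set \<Rightarrow> bool" where
  "simple_graph V E \<longleftrightarrow> finite V \<and> (\<forall>e\<in>E. \<exists>x y. x \<in> V \<and> y \<in> V \<and> x \<noteq> y \<and> e = {x, y})"

definition adj :: "'a set set \<Rightarrow> 'a \<Rightarrow> 'a \<Rightarrow> bool" where
  "adj E x y \<longleftrightarrow> {x, y} \<in> E"

inductive_set filled :: "'a set \<Rightarrow> 'a set set \<Rightarrow> 'a set \<Rightarrow> 'a set"
  for V :: "'a set" and E :: "'a set set" and S :: "'a set" where
  init: "v \<in> S \<Longrightarrow> v \<in> filled V E S"
| force: "\<lbrakk> v \<in> filled V E S; v \<in> V; u \<in> V; adj E v u;
            \<forall>w\<in>V. adj E v w \<and> w \<noteq> u \<longrightarrow> w \<in> filled V E S \<rbrakk>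
          \<Longrightarrow> u \<in> filled V E S"

definition zero_forcing_set :: "'a set \<Rightarrow> 'a set set \<Rightarrow> 'a set \<Rightarrow> bool" where
  "zero_forcing_set V E S \<longleftrightarrow> S \<subseteq> V \<and> V \<subseteq> filled V E S"

definition zero_forcing_number :: "'a set \<Rightarrow> 'a set set \<Rightarrow> nat" where
  "zero_forcing_number V E = Min (card ` {S. zero_forcing_set V E S})"

definition hprod_vertices :: "'a set \<Rightarrow> 'b set \<Rightarrow> ('a \<times> 'b) set" where
  "hprod_vertices VW VH = VW \<times> VH"

definition hprod_edges ::
  "'a set \<Rightarrow> 'a set set \<Rightarrow> 'a set \<Rightarrow> 'b set \<Rightarrow> 'b set set \<Rightarrow> ('a \<times> 'b) set set" where
  "hprod_edges VW EW U VH EH =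
     {{(x1, y1), (x2, y2)} | x1 y1 x2 y2.
        x1 \<in> VW \<and> x2 \<in> VW \<and> y1 \<in> VH \<and> y2 \<in> VH \<and>
        ((x1 = x2 \<and> x1 \<in> U \<and> adj EH y1 y2) \<or> (y1 = y2 \<and> adj EW x1 x2))}"

end

theory Submission
  imports Defs
begin

text \<open>Both bounds come from explicit zero forcing sets of \<open>G = W(U) \<sqinter> H\<close>. If \<open>S\<close> forces \<open>W\<close>,
  then \<open>S \<times> V(H)\<close> forces \<open>G\<close>: every force \<open>v \<rightarrow> u\<close> of \<open>W\<close> can be replayed simultaneously in
  all copies \<open>V(W) \<times> {y}\<close>, because the only neighbours of \<open>(v, y)\<close> outside its copy are the
  vertices \<open>(v, y')\<close>, which are already filled. Symmetrically, if \<open>T\<close> forces \<open>H\<close>, then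
  \<open>U \<times> T \<union> (V(W) - U) \<times> V(H)\<close> forces \<open>G\<close> by replaying the forces of \<open>H\<close> in all copies
  \<open>{x} \<times> V(H)\<close>, \<open>x \<in> U\<close>.\<close>

lemma adj_commute: "adj E x y \<longleftrightarrow> adj E y x"
  by (simp add: adj_def insert_commute)

lemma adj_hprod_edges:
  "adj (hprod_edges VW EW U VH EH) (x1, y1) (x2, y2) \<longleftrightarrow>
     x1 \<in> VW \<and> x2 \<in> VW \<and> y1 \<in> VH \<and> y2 \<in> VH \<and>
     ((x1 = x2 \<and> x1 \<in> U \<and> adj EH y1 y2) \<or> (y1 = y2 \<and> adj EW x1 x2))"
  (is "?L \<longleftrightarrow> ?R")
proof
  assume ?R
  then show ?L unfolding adj_def hprod_edges_def by blast
next
  assume ?L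
  then obtain a1 b1 a2 b2 where e: "{(x1, y1), (x2, y2)} = {(a1, b1), (a2, b2)}"
    and c: "a1 \<in> VW \<and> a2 \<in> VW \<and> b1 \<in> VH \<and> b2 \<in> VH \<and>
            ((a1 = a2 \<and> a1 \<in> U \<and> adj EH b1 b2) \<or> (b1 = b2 \<and> adj EW a1 a2))"
    unfolding adj_def hprod_edges_def by blast
  from e have "((x1, y1) = (a1, b1) \<and> (x2, y2) = (a2, b2)) \<or>
               ((x1, y1) = (a2, b2) \<and> (x2, y2) = (a1, b1))"
    by (simp add: doubleton_eq_iff)
  then show ?R using c adj_commute by (metis Pair_inject)
qed

lemma finite_zero_forcing_sets:
  assumes "finite V"
  shows "finite {S. zero_forcing_set V E S}"
proof (rule finite_subset)
  show "{S. zero_forcing_set V E S} \<subseteq> Pow V" by (auto simp: zero_forcing_set_def)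
qed (use assms in simp)

lemma zero_forcing_number_le:
  assumes "finite V" and "zero_forcing_set V E S"
  shows "zero_forcing_number V E \<le> card S"
  using finite_zero_forcing_sets[OF assms(1)] assms(2)
  unfolding zero_forcing_number_def by simp

lemma zero_forcing_number_attained:
  assumes "finite V"
  obtains S where "zero_forcing_set V E S" and "card S = zero_forcing_number V E"
proof -
  have "finite {S. zero_forcing_set V E S}" using assms by (rule finite_zero_forcing_sets)
  moreover have "zero_forcing_set V E V" by (auto simp: zero_forcing_set_def intro: filled.init)
  ultimately have "zero_forcing_number V E \<in> card ` {S. zero_forcing_set V E S}"
    unfolding zero_forcing_number_def by (intro Min_in) auto
  then show ?thesis using that by auto
qed

text \<open>The induction runs over all copies \<open>f _ y\<close> at once, which is why a neighbour
  \<open>f x y'\<close> of \<open>f x y\<close> in another copy counts as filled.\<close>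

lemma filled_in_copies:
  fixes f :: "'a \<Rightarrow> 'c \<Rightarrow> 'b"
  assumes x: "x \<in> filled V' E' S'"
    and seeds: "\<And>x y. x \<in> S' \<Longrightarrow> y \<in> Y \<Longrightarrow> f x y \<in> filled V E S"
    and copy_in: "\<And>x y. x \<in> V' \<Longrightarrow> y \<in> Y \<Longrightarrow> f x y \<in> V"
    and copy_adj: "\<And>x x' y. x \<in> V' \<Longrightarrow> x' \<in> V' \<Longrightarrow> y \<in> Y \<Longrightarrow> adj E' x x' \<Longrightarrow>
                     adj E (f x y) (f x' y)"
    and neighbours: "\<And>x y w. x \<in> V' \<Longrightarrow> y \<in> Y \<Longrightarrow> w \<in> V \<Longrightarrow> adj E (f x y) w \<Longrightarrow>
                       (\<exists>x'\<in>V'. adj E' x x' \<and> w = f x' y) \<or> (\<exists>y'\<in>Y. w = f x y') \<or>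
                       w \<in> filled V E S"
  shows "\<forall>y\<in>Y. f x y \<in> filled V E S"
  using x
proof (induction rule: filled.induct)
  case (init v)
  then show ?case using seeds by blast
next
  case (force v u)
  show ?case
  proof
    fix y assume y: "y \<in> Y"
    show "f u y \<in> filled V E S"
    proof (rule filled.force[where v = "f v y"])
      show "f v y \<in> filled V E S" using force.IH y by blast
      show "f v y \<in> V" "f u y \<in> V" using force.hyps y copy_in by auto
      show "adj E (f v y) (f u y)" using force.hyps y copy_adj by blast
      show "\<forall>w\<in>V. adj E (f v y) w \<and> w \<noteq> f u y \<longrightarrow> w \<in> filled V E S"
      proof (intro ballI impI)
        fix w assume "w \<in> V" and w: "adj E (f v y) w \<and> w \<noteq> f u y"
        then consider (same_copy) x' where "x' \<in> V'" "adj E' v x'" "w = f x' y"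
          | (other_copy) y' where "y' \<in> Y" "w = f v y'"
          | (filled) "w \<in> filled V E S"
          using neighbours force.hyps y by blast
        then show "w \<in> filled V E S"
        proof cases
          case same_copy
          then show ?thesis using force.IH w y by blast
        qed (use force.IH in auto)
      qed
    qed
  qed
qed

lemma zero_forcing_set_hprod_left:
  assumes "zero_forcing_set VW EW S"
  shows "zero_forcing_set (hprod_vertices VW VH) (hprod_edges VW EW U VH EH) (S \<times> VH)"
proof -
  have "\<forall>y\<in>VH. (x, y) \<in> filled (hprod_vertices VW VH) (hprod_edges VW EW U VH EH) (S \<times> VH)"
    if "x \<in> filled VW EW S" for x
    using that
    by (rule filled_in_copies[where f = Pair and V' = VW])
       (auto simp: hprod_vertices_def adj_hprod_edges intro: filled.init)
  then show ?thesis using assms by (auto simp: zero_forcing_set_def hprod_vertices_def)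
qed

lemma zero_forcing_set_hprod_right:
  assumes "zero_forcing_set VH EH T" and "U \<subseteq> VW"
  shows "zero_forcing_set (hprod_vertices VW VH) (hprod_edges VW EW U VH EH)
           (U \<times> T \<union> (VW - U) \<times> VH)"
proof -
  let ?S = "U \<times> T \<union> (VW - U) \<times> VH"
  have layers: "\<forall>x\<in>U. (x, y) \<in> filled (hprod_vertices VW VH) (hprod_edges VW EW U VH EH) ?S"
    if "y \<in> filled VH EH T" for y
    using that
    by (rule filled_in_copies[where f = "\<lambda>y x. (x, y)" and V' = VH])
       (use assms(2) in \<open>auto simp: hprod_vertices_def adj_hprod_edges intro: filled.init\<close>)
  have "(x, y) \<in> filled (hprod_vertices VW VH) (hprod_edges VW EW U VH EH) ?S"
    if "x \<in> VW" "y \<in> VH" for x y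
  proof (cases "x \<in> U")
    case True
    then show ?thesis using layers assms(1) that by (auto simp: zero_forcing_set_def)
  next
    case False
    then show ?thesis using that by (auto intro: filled.init)
  qed
  then show ?thesis using assms by (auto simp: zero_forcing_set_def hprod_vertices_def)
qed

lemma zero_forcing_number_hprod_le_left:
  assumes "finite VW" and "finite VH"
  shows "zero_forcing_number (hprod_vertices VW VH) (hprod_edges VW EW U VH EH)
         \<le> zero_forcing_number VW EW * card VH"
proof -
  obtain S where S: "zero_forcing_set VW EW S" "card S = zero_forcing_number VW EW"
    using zero_forcing_number_attained[OF assms(1)] .
  have "zero_forcing_number (hprod_vertices VW VH) (hprod_edges VW EW U VH EH) \<le> card (S \<times> VH)"
    using assms zero_forcing_set_hprod_left[OF S(1)]
    by (intro zero_forcing_number_le) (auto simp: hprod_vertices_def)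
  then show ?thesis using S(2) by (simp add: card_cartesian_product)
qed

lemma zero_forcing_number_hprod_le_right:
  assumes "finite VW" and "finite VH" and "U \<subseteq> VW"
  shows "zero_forcing_number (hprod_vertices VW VH) (hprod_edges VW EW U VH EH)
         \<le> zero_forcing_number VH EH * card U + (card VW - card U) * card VH"
proof -
  obtain T where T: "zero_forcing_set VH EH T" "card T = zero_forcing_number VH EH"
    using zero_forcing_number_attained[OF assms(2)] .
  have fin: "finite U" "finite T"
    using assms T(1) finite_subset by (auto simp: zero_forcing_set_def)
  have "card (U \<times> T \<union> (VW - U) \<times> VH) = card U * card T + card (VW - U) * card VH"
    using fin assms by (subst card_Un_disjoint) (auto simp: card_cartesian_product)
  also have "card (VW - U) = card VW - card U" using assms(3) fin by (simp add: card_Diff_subset)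
  finally have "card (U \<times> T \<union> (VW - U) \<times> VH)
                = zero_forcing_number VH EH * card U + (card VW - card U) * card VH"
    using T(2) by simp
  moreover have "zero_forcing_number (hprod_vertices VW VH) (hprod_edges VW EW U VH EH)
                 \<le> card (U \<times> T \<union> (VW - U) \<times> VH)"
    using assms zero_forcing_set_hprod_right[OF T(1) assms(3)]
    by (intro zero_forcing_number_le) (auto simp: hprod_vertices_def)
  ultimately show ?thesis by simp
qed

theorem mainTheorem11:
  fixes VW :: "'a set" and EW :: "'a set set" and VH :: "'b set" and EH :: "'b set set"
    and U :: "'a set"
  assumes "simple_graph VW EW" and "simple_graph VH EH" and "U \<subseteq> VW"
  shows "zero_forcing_number (hprod_vertices VW VH) (hprod_edges VW EW U VH EH)
         \<le> min (zero_forcing_number VW EW * card VH)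
                (zero_forcing_number VH EH * card U + (card VW - card U) * card VH)"
proof -
  have "finite VW" and "finite VH" using assms(1,2) by (auto simp: simple_graph_def)
  then show ?thesis
    using zero_forcing_number_hprod_le_left[of VW VH EW U EH]
      zero_forcing_number_hprod_le_right[of VW VH U EW EH] assms(3)
    by simp
qed

end
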